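(* Let $n\ge3$ and let $(c(t),\xi(t))$ be a $C^1$ solution of the Hamiltonian system below. Define $$l_3=\bar\xi_3+2c_1\bar\xi_4+\dots+(n-2)c_{n-3}\bar\xi_n .$$ Then (i) $\dot l_1=\bar l_2\,l_3$ and $\dot l_2=-\bar l_1\,l_3$; (ii) $|l_1|^2+|l_2|^2$ is constant in $t$, and consequently the energy $\frac12\bigl(|u_1|^2+|u_2|^2\bigr)$ with $u_1=\dot c_1$, $u_2=\dot c_2-2c_1\dot c_1$ (equivalently the Carnot–Carathéodory length of the tangent vector $\dot c=u_1L_1+u_2L_2$, with $L_1,L_2$ orthonormal) is conserved along the solution.
   Context: Complex-valued functions $c_1,\dots,c_n,\xi_1,\dots,\xi_n$ of a real variable $t$; $l_1=\bar\xi_1+2c_1\bar\xi_2+\dots+nc_{n-1}\bar\xi_n$, $l_2=\bar\xi_2+2c_1\bar\xi_3+\dots+(n-1)c_{n-2}\bar\xi_n$. The Hamiltonian system is $\dot c_1=\bar l_1$, $\dot c_2=2c_1\bar l_1+\bar l_2$, $\dot c_k=kc_{k-1}\bar l_1+(k-1)c_{k-2}\bar l_2$ ($k=3,\dots,n$), $\dot\xi_k=-(k+1)\xi_{k+1}l_1-(k+1)\xi_{k+2}l_2$ ($k=1,\dots,n-2$), $\dot\xi_{n-1}=-n\xi_nl_1$, $\dot\xi_n=0$. The vector fields are $L_j=\partial_j+\sum_{k=1}^{n-j}(k+1)c_k\partial_{j+k}$, $\partial_k=\partial/\partial c_k$. *)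

theory Defs
  imports "HOL-Analysis.Analysis"
begin

text \<open>Coefficient convention: c_0 = 1, so that
  l_j = conj(xi_j) + 2 c_1 conj(xi_(j+1)) + ... + (n-j+1) c_(n-j) conj(xi_n).\<close>

definition cc :: "(nat \<Rightarrow> complex) \<Rightarrow> nat \<Rightarrow> complex" where
  "cc c i = (if i = 0 then 1 else c i)"

definition lfun :: "nat \<Rightarrow> nat \<Rightarrow> (nat \<Rightarrow> complex) \<Rightarrow> (nat \<Rightarrow> complex) \<Rightarrow> complex" where
  "lfun n j c \<xi> = (\<Sum>k=j..n. of_nat (k - j + 1) * cc c (k - j) * cnj (\<xi> k))"

end

theory Submission
  imports Defs
begin

(* With c_0 = 1 and conj xi_k = 0 beyond n, every l_j (j >= 1) is the sum over m < n of
   (m + 1) c_m conj xi_(m+j).  Differentiating along the flow, the terms of the product rule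
   telescope after shifting m by one (the conj l_1 part) and by two (the conj l_2 part),
   leaving l_j' = (1 - j) conj l_1 l_(j+1) + (2 - j) conj l_2 l_(j+2).  For j = 1, 2 this is
   (i), and then (|l_1|^2 + |l_2|^2)' = 2 Re (conj l_1 conj l_2 l_3 - conj l_2 conj l_1 l_3) = 0.
   The energy equals (|l_1|^2 + |l_2|^2) / 2 because u_1 = conj l_1 and u_2 = conj l_2. *)

definition weighted_pairing :: "nat \<Rightarrow> (nat \<Rightarrow> complex) \<Rightarrow> (nat \<Rightarrow> complex) \<Rightarrow> nat \<Rightarrow> complex" where
  "weighted_pairing n C X j = (\<Sum>m<n. of_nat (m + 1) * C m * X (m + j))"

(* Extending conj xi by zero beyond n lets every l_j range over the same indices m < n. *)
definition cnj_trunc :: "nat \<Rightarrow> (nat \<Rightarrow> complex) \<Rightarrow> nat \<Rightarrow> complex" where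
  "cnj_trunc n \<xi> k = (if k \<le> n then cnj (\<xi> k) else 0)"

lemma lfun_eq_weighted_pairing:
  assumes "1 \<le> j"
  shows "lfun n j c \<xi> = weighted_pairing n (cc c) (cnj_trunc n \<xi>) j"
proof -
  let ?g = "\<lambda>m. of_nat (m + 1) * cc c m * cnj (\<xi> (m + j))"
  have "{j..n} = (\<lambda>m. m + j) ` {m. m + j \<le> n}"
    by (auto simp: image_iff) presburger
  then have "lfun n j c \<xi> = sum ?g {m. m + j \<le> n}"
    by (simp add: lfun_def sum.reindex)
  also have "{m. m + j \<le> n} = {m \<in> {..<n}. m + j \<le> n}"
    using assms by auto
  also have "sum ?g \<dots> = (\<Sum>m<n. if m + j \<le> n then ?g m else 0)"
    by (rule sum.inter_filter) simp
  also have "\<dots> = weighted_pairing n (cc c) (cnj_trunc n \<xi>) j"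
    by (auto simp: weighted_pairing_def cnj_trunc_def intro!: sum.cong)
  finally show ?thesis .
qed

lemma has_vector_derivative_weighted_pairing:
  assumes "\<And>m. m < n \<Longrightarrow> ((\<lambda>s. C s m) has_vector_derivative dC m) (at t within S)"
    and "\<And>m. m < n \<Longrightarrow> ((\<lambda>s. X s (m + j)) has_vector_derivative dX (m + j)) (at t within S)"
  shows "((\<lambda>s. weighted_pairing n (C s) (X s) j) has_vector_derivative
           weighted_pairing n dC (X t) j + weighted_pairing n (C t) dX j) (at t within S)"
  unfolding weighted_pairing_def sum.distrib[symmetric] mult.assoc distrib_left[symmetric]
  by (intro has_vector_derivative_sum has_vector_derivative_mult_right)
    (rule has_vector_derivative_mult[OF assms, THEN has_vector_derivative_eq_rhs]; simp add: ac_simps)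

lemma weighted_pairing_flow_identity:
  fixes C dC X dX :: "nat \<Rightarrow> complex" and A B :: complex
  assumes "1 \<le> j"
    and X_vanish: "\<And>k. n < k \<Longrightarrow> X k = 0"
    and dC: "\<And>m. m < n \<Longrightarrow> dC m = of_nat m * C (m - 1) * A + of_nat (m - 1) * C (m - 2) * B"
    and dX: "\<And>k. j \<le> k \<Longrightarrow> dX k = - (of_nat (k + 1) * X (k + 1) * A) - of_nat (k + 1) * X (k + 2) * B"
  shows "weighted_pairing n dC X j + weighted_pairing n C dX j
           = (1 - of_nat j) * A * weighted_pairing n C X (j + 1)
             + (2 - of_nat j) * B * weighted_pairing n C X (j + 2)"
proof -
  define f where "f m = of_nat (m + 1) * of_nat m * C (m - 1) * X (m + j)" for m
  define g where "g m = of_nat (m + 1) * of_nat (m - 1) * C (m - 2) * X (m + j)" for m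
  define h where "h m = g m + g (Suc m)" for m \<comment> \<open>turns the shift by two into a shift by one\<close>
  have summand: "of_nat (m + 1) * dC m * X (m + j) + of_nat (m + 1) * C m * dX (m + j)
      = A * (f m - f (Suc m)) + B * (h m - h (Suc m))
        + (1 - of_nat j) * A * (of_nat (m + 1) * C m * X (m + (j + 1)))
        + (2 - of_nat j) * B * (of_nat (m + 1) * C m * X (m + (j + 2)))" if "m < n" for m
    using that assms(1) by (simp add: dC dX f_def g_def h_def algebra_simps numeral_eq_Suc)
  have "weighted_pairing n dC X j + weighted_pairing n C dX j
      = (\<Sum>m<n. of_nat (m + 1) * dC m * X (m + j) + of_nat (m + 1) * C m * dX (m + j))"
    by (simp add: weighted_pairing_def sum.distrib)
  also have "\<dots> = (\<Sum>m<n. A * (f m - f (Suc m)) + B * (h m - h (Suc m))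
        + (1 - of_nat j) * A * (of_nat (m + 1) * C m * X (m + (j + 1)))
        + (2 - of_nat j) * B * (of_nat (m + 1) * C m * X (m + (j + 2))))"
    by (rule sum.cong[OF refl], rule summand) simp
  also have "\<dots> = A * (\<Sum>m<n. f m - f (Suc m)) + B * (\<Sum>m<n. h m - h (Suc m))
        + (1 - of_nat j) * A * weighted_pairing n C X (j + 1)
        + (2 - of_nat j) * B * weighted_pairing n C X (j + 2)"
    by (simp add: weighted_pairing_def sum.distrib sum_distrib_left mult.assoc)
  also have "(\<Sum>m<n. f m - f (Suc m)) = 0"
    unfolding sum_lessThan_telescope' using assms(1) by (simp add: f_def X_vanish)
  also have "(\<Sum>m<n. h m - h (Suc m)) = 0"
    unfolding sum_lessThan_telescope' using assms(1) by (simp add: h_def g_def X_vanish)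
  finally show ?thesis by simp
qed

lemma cmod_squares_constant_on:
  fixes f g h :: "real \<Rightarrow> complex"
  assumes "convex S"
    and f: "\<And>t. t \<in> S \<Longrightarrow> (f has_vector_derivative cnj (g t) * h t) (at t within S)"
    and g: "\<And>t. t \<in> S \<Longrightarrow> (g has_vector_derivative - (cnj (f t) * h t)) (at t within S)"
  shows "\<exists>K. \<forall>t\<in>S. (cmod (f t))\<^sup>2 + (cmod (g t))\<^sup>2 = K"
proof -
  have "\<exists>K. \<forall>t\<in>S. f t * cnj (f t) + g t * cnj (g t) = K"
  proof (rule has_derivative_zero_constant[OF \<open>convex S\<close>])
    fix t assume "t \<in> S"
    have "((\<lambda>s. f s * cnj (f s) + g s * cnj (g s)) has_vector_derivative 0) (at t within S)"
      by (rule has_vector_derivative_add[OF has_vector_derivative_mult has_vector_derivative_mult,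
            THEN has_vector_derivative_eq_rhs])
        (auto intro: f g has_vector_derivative_cnj \<open>t \<in> S\<close> simp: algebra_simps)
    then show "((\<lambda>s. f s * cnj (f s) + g s * cnj (g s)) has_derivative (\<lambda>_. 0)) (at t within S)"
      by (simp add: has_vector_derivative_def)
  qed
  then show ?thesis
    by (metis complex_norm_square Re_complex_of_real plus_complex.sel(1))
qed

locale hamiltonian_solution =
  fixes n :: nat and I :: "real set"
    and c \<xi> c' \<xi>' :: "real \<Rightarrow> nat \<Rightarrow> complex"
  assumes dc: "\<And>t k. t \<in> I \<Longrightarrow> 1 \<le> k \<Longrightarrow> k \<le> n \<Longrightarrow>
               ((\<lambda>s. c s k) has_vector_derivative c' t k) (at t within I)"
    and d\<xi>: "\<And>t k. t \<in> I \<Longrightarrow> 1 \<le> k \<Longrightarrow> k \<le> n \<Longrightarrow>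
               ((\<lambda>s. \<xi> s k) has_vector_derivative \<xi>' t k) (at t within I)"
    and ode_c1: "\<And>t. t \<in> I \<Longrightarrow> c' t 1 = cnj (lfun n 1 (c t) (\<xi> t))"
    and ode_c2: "\<And>t. t \<in> I \<Longrightarrow>
               c' t 2 = 2 * c t 1 * cnj (lfun n 1 (c t) (\<xi> t)) + cnj (lfun n 2 (c t) (\<xi> t))"
    and ode_ck: "\<And>t k. t \<in> I \<Longrightarrow> 3 \<le> k \<Longrightarrow> k \<le> n \<Longrightarrow>
               c' t k = of_nat k * c t (k - 1) * cnj (lfun n 1 (c t) (\<xi> t))
                        + of_nat (k - 1) * c t (k - 2) * cnj (lfun n 2 (c t) (\<xi> t))"
    and ode_\<xi>k: "\<And>t k. t \<in> I \<Longrightarrow> 1 \<le> k \<Longrightarrow> k \<le> n - 2 \<Longrightarrow>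
               \<xi>' t k = - (of_nat (k + 1) * \<xi> t (k + 1) * lfun n 1 (c t) (\<xi> t))
                        - of_nat (k + 1) * \<xi> t (k + 2) * lfun n 2 (c t) (\<xi> t)"
    and ode_\<xi>n1: "\<And>t. t \<in> I \<Longrightarrow> \<xi>' t (n - 1) = - (of_nat n * \<xi> t n * lfun n 1 (c t) (\<xi> t))"
    and ode_\<xi>n: "\<And>t. t \<in> I \<Longrightarrow> \<xi>' t n = 0"
begin

abbreviation l :: "nat \<Rightarrow> real \<Rightarrow> complex" where
  "l j t \<equiv> lfun n j (c t) (\<xi> t)"

(* The equations for c_1, c_2 and c_k are the cases of a single formula, thanks to c_0 = 1. *)
lemma cc_derivative_eq:
  assumes "t \<in> I" "m < n"
  shows "((c' t)(0 := 0)) m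
           = of_nat m * cc (c t) (m - 1) * cnj (l 1 t) + of_nat (m - 1) * cc (c t) (m - 2) * cnj (l 2 t)"
proof -
  consider "m = 0" | "m = 1" | "m = 2" | "3 \<le> m" by linarith
  then show ?thesis
    by cases (use assms ode_c1 ode_c2 ode_ck in \<open>auto simp: cc_def numeral_2_eq_2\<close>)
qed

lemma cnj_trunc_derivative_eq:
  assumes "t \<in> I" "1 \<le> k"
  shows "cnj_trunc n (\<xi>' t) k
           = - (of_nat (k + 1) * cnj_trunc n (\<xi> t) (k + 1) * cnj (l 1 t))
             - of_nat (k + 1) * cnj_trunc n (\<xi> t) (k + 2) * cnj (l 2 t)"
proof -
  consider "k + 2 \<le> n" | "k = n - 1" "k < n" | "k = n" | "n < k" by linarith
  then show ?thesis
    by cases (use assms ode_\<xi>k[of t k] ode_\<xi>n1 ode_\<xi>n in \<open>auto simp: cnj_trunc_def\<close>)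
qed

lemma cc_has_vector_derivative:
  assumes "t \<in> I" "m < n"
  shows "((\<lambda>s. cc (c s) m) has_vector_derivative ((c' t)(0 := 0)) m) (at t within I)"
  using assms dc[of t m] by (cases "m = 0") (auto simp: cc_def)

lemma cnj_trunc_has_vector_derivative:
  assumes "t \<in> I" "1 \<le> k"
  shows "((\<lambda>s. cnj_trunc n (\<xi> s) k) has_vector_derivative cnj_trunc n (\<xi>' t) k) (at t within I)"
  using assms has_vector_derivative_cnj[OF d\<xi>[of t k]] by (cases "k \<le> n") (auto simp: cnj_trunc_def)

lemma l_has_vector_derivative:
  assumes "t \<in> I" "1 \<le> j"
  shows "((\<lambda>s. l j s) has_vector_derivative
           (1 - of_nat j) * cnj (l 1 t) * l (j + 1) t + (2 - of_nat j) * cnj (l 2 t) * l (j + 2) t)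
         (at t within I)"
proof -
  have "((\<lambda>s. weighted_pairing n (cc (c s)) (cnj_trunc n (\<xi> s)) j) has_vector_derivative
          weighted_pairing n ((c' t)(0 := 0)) (cnj_trunc n (\<xi> t)) j
          + weighted_pairing n (cc (c t)) (cnj_trunc n (\<xi>' t)) j) (at t within I)"
    using assms by (intro has_vector_derivative_weighted_pairing
        cc_has_vector_derivative cnj_trunc_has_vector_derivative) auto
  also have "weighted_pairing n ((c' t)(0 := 0)) (cnj_trunc n (\<xi> t)) j
          + weighted_pairing n (cc (c t)) (cnj_trunc n (\<xi>' t)) j
        = (1 - of_nat j) * cnj (l 1 t) * weighted_pairing n (cc (c t)) (cnj_trunc n (\<xi> t)) (j + 1)
          + (2 - of_nat j) * cnj (l 2 t) * weighted_pairing n (cc (c t)) (cnj_trunc n (\<xi> t)) (j + 2)"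
    using assms by (intro weighted_pairing_flow_identity cc_derivative_eq cnj_trunc_derivative_eq)
      (auto simp: cnj_trunc_def)
  finally show ?thesis
    using assms by (simp add: lfun_eq_weighted_pairing)
qed

end

theorem proposition5:
  fixes n :: nat and I :: "real set"
    and c \<xi> c' \<xi>' :: "real \<Rightarrow> nat \<Rightarrow> complex"
  assumes n3: "n \<ge> 3"
    and I: "is_interval I"
    and dc: "\<And>t k. t \<in> I \<Longrightarrow> 1 \<le> k \<Longrightarrow> k \<le> n \<Longrightarrow>
               ((\<lambda>s. c s k) has_vector_derivative c' t k) (at t within I)"
    and d\<xi>: "\<And>t k. t \<in> I \<Longrightarrow> 1 \<le> k \<Longrightarrow> k \<le> n \<Longrightarrow>
               ((\<lambda>s. \<xi> s k) has_vector_derivative \<xi>' t k) (at t within I)"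
    and ode_c1: "\<And>t. t \<in> I \<Longrightarrow> c' t 1 = cnj (lfun n 1 (c t) (\<xi> t))"
    and ode_c2: "\<And>t. t \<in> I \<Longrightarrow>
               c' t 2 = 2 * c t 1 * cnj (lfun n 1 (c t) (\<xi> t)) + cnj (lfun n 2 (c t) (\<xi> t))"
    and ode_ck: "\<And>t k. t \<in> I \<Longrightarrow> 3 \<le> k \<Longrightarrow> k \<le> n \<Longrightarrow>
               c' t k = of_nat k * c t (k - 1) * cnj (lfun n 1 (c t) (\<xi> t))
                        + of_nat (k - 1) * c t (k - 2) * cnj (lfun n 2 (c t) (\<xi> t))"
    and ode_\<xi>k: "\<And>t k. t \<in> I \<Longrightarrow> 1 \<le> k \<Longrightarrow> k \<le> n - 2 \<Longrightarrow>
               \<xi>' t k = - (of_nat (k + 1) * \<xi> t (k + 1) * lfun n 1 (c t) (\<xi> t))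
                        - of_nat (k + 1) * \<xi> t (k + 2) * lfun n 2 (c t) (\<xi> t)"
    and ode_\<xi>n1: "\<And>t. t \<in> I \<Longrightarrow> \<xi>' t (n - 1) = - (of_nat n * \<xi> t n * lfun n 1 (c t) (\<xi> t))"
    and ode_\<xi>n: "\<And>t. t \<in> I \<Longrightarrow> \<xi>' t n = 0"
  shows "(\<forall>t\<in>I.
            ((\<lambda>s. lfun n 1 (c s) (\<xi> s)) has_vector_derivative
                 cnj (lfun n 2 (c t) (\<xi> t)) * lfun n 3 (c t) (\<xi> t)) (at t within I)
          \<and> ((\<lambda>s. lfun n 2 (c s) (\<xi> s)) has_vector_derivative
                 - (cnj (lfun n 1 (c t) (\<xi> t)) * lfun n 3 (c t) (\<xi> t))) (at t within I))
       \<and> (\<exists>C. \<forall>t\<in>I. (cmod (lfun n 1 (c t) (\<xi> t)))\<^sup>2 + (cmod (lfun n 2 (c t) (\<xi> t)))\<^sup>2 = C)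
       \<and> (\<exists>E. \<forall>t\<in>I. ((cmod (c' t 1))\<^sup>2 + (cmod (c' t 2 - 2 * c t 1 * c' t 1))\<^sup>2) / 2 = E)"
proof -
  interpret hamiltonian_solution n I c \<xi> c' \<xi>'
    by (rule hamiltonian_solution.intro) (fact assms)+
  have l1: "((\<lambda>s. l 1 s) has_vector_derivative cnj (l 2 t) * l 3 t) (at t within I)"
    if "t \<in> I" for t
    using l_has_vector_derivative[OF that, of 1] by (simp add: numeral_eq_Suc)
  have l2: "((\<lambda>s. l 2 s) has_vector_derivative - (cnj (l 1 t) * l 3 t)) (at t within I)"
    if "t \<in> I" for t
    using l_has_vector_derivative[OF that, of 2] by (simp add: numeral_eq_Suc)
  obtain K where K: "\<forall>t\<in>I. (cmod (l 1 t))\<^sup>2 + (cmod (l 2 t))\<^sup>2 = K"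
    using cmod_squares_constant_on[OF is_interval_convex[OF I] l1 l2] by blast
  have "\<forall>t\<in>I. ((cmod (c' t 1))\<^sup>2 + (cmod (c' t 2 - 2 * c t 1 * c' t 1))\<^sup>2) / 2 = K / 2"
    using K ode_c1 ode_c2 by simp
  with l1 l2 K show ?thesis by blast
qed

end
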